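(* Let $N=\{1,\dots,n\}$, $n\ge2$, be a parallel-link network with unit demand and affine latencies $\ell_i(x_i)=a_ix_i+b_i$, $a_i>0$, $b_i\ge 0$, with $x_i(0)>0$ for all $i\in N$. Then for every $c\in\mathbb{R}_+$ there is at most one pair $(t,x)$ satisfying: there is $K$ with $a_ix_i+b_i+t_i=K$ for all $i$, $\sum_ix_i=1$, $t_i=\min\{(a_i+1/\sum_{j\ne i}1/a_j)x_i,\,c\}$ for all $i$, and $x_i>0$ for all $i$. Consequently the $c$-capped subgame perfect Nash equilibrium is unique, i.e. $|\mathcal{T}(c)|=1$.
   Context: Parallel links $N$, one unit of flow; flows $x\in\mathbb{R}^N_+$ with $\sum_ix_i=1$. For tolls $t\in\mathbb{R}^N_+$, $x(t)$ is the unique Wardrop equilibrium for $t$ (for all $i,j$ with $x_i>0$: $\ell_i(x_i)+t_i\le\ell_j(x_j)+t_j$); $x(0)$ is the untolled one. Profit $\Pi_i(t)=t_ix_i(t)$. $\mathcal{T}(c)$: toll vectors $t$ with $0\le t_i\le c$ for all $i$ such that for every $i$ and $t'_i\in[0,c]$, $\Pi_i(t_i,t_{-i})\ge \Pi_i(t'_i,t_{-i})$ (flow recomputed). *)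

theory Defs
  imports Complex_Main
begin

text \<open>Links are indexed by 0..<n. Latency of link i is a i * x + b i.
  Flows and tolls are functions nat => real; entries outside 0..<n are fixed to 0.\<close>

definition wardrop :: "nat \<Rightarrow> (nat \<Rightarrow> real) \<Rightarrow> (nat \<Rightarrow> real) \<Rightarrow> (nat \<Rightarrow> real) \<Rightarrow> (nat \<Rightarrow> real) \<Rightarrow> bool" where
  "wardrop n a b t x \<longleftrightarrow>
     (\<forall>i<n. 0 \<le> x i) \<and> (\<Sum>i<n. x i) = 1 \<and> (\<forall>i\<ge>n. x i = 0) \<and>
     (\<forall>i<n. \<forall>j<n. 0 < x i \<longrightarrow> a i * x i + b i + t i \<le> a j * x j + b j + t j)"

definition weq :: "nat \<Rightarrow> (nat \<Rightarrow> real) \<Rightarrow> (nat \<Rightarrow> real) \<Rightarrow> (nat \<Rightarrow> real) \<Rightarrow> (nat \<Rightarrow> real)" where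
  "weq n a b t = (THE x. wardrop n a b t x)"

definition profit :: "nat \<Rightarrow> (nat \<Rightarrow> real) \<Rightarrow> (nat \<Rightarrow> real) \<Rightarrow> (nat \<Rightarrow> real) \<Rightarrow> nat \<Rightarrow> real" where
  "profit n a b t i = t i * weq n a b t i"

definition capped_eq :: "nat \<Rightarrow> (nat \<Rightarrow> real) \<Rightarrow> (nat \<Rightarrow> real) \<Rightarrow> real \<Rightarrow> (nat \<Rightarrow> real) set" where
  "capped_eq n a b c = {t. (\<forall>i<n. 0 \<le> t i \<and> t i \<le> c) \<and> (\<forall>i\<ge>n. t i = 0) \<and>
     (\<forall>i<n. \<forall>t'. 0 \<le> t' \<and> t' \<le> c \<longrightarrow> profit n a b (t(i := t')) i \<le> profit n a b t i)}"

definition candidate :: "nat \<Rightarrow> (nat \<Rightarrow> real) \<Rightarrow> (nat \<Rightarrow> real) \<Rightarrow> real \<Rightarrow> (nat \<Rightarrow> real) \<Rightarrow> (nat \<Rightarrow> real) \<Rightarrow> bool" where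
  "candidate n a b c t x \<longleftrightarrow>
     (\<exists>K. \<forall>i<n. a i * x i + b i + t i = K) \<and> (\<Sum>i<n. x i) = 1 \<and>
     (\<forall>i<n. t i = min ((a i + 1 / (\<Sum>j\<in>{..<n} - {i}. 1 / a j)) * x i) c) \<and>
     (\<forall>i<n. 0 < x i)"

end

theory Submission
  imports Defs
begin

text \<open>Wardrop flows are unique because affine costs with positive slopes are strictly
  monotone. For a used link i one has t_i + \<sigma>_i x_i \<le> C_i, with equality when every link
  is used, where \<sigma>_i = a_i + 1 / (\<Sum>j\<noteq>i. 1/a_j) and the choke toll C_i depends only on the
  other tolls. Hence link i's profit against fixed rivals is at most t (C_i - t) / \<sigma>_i, a
  parabola whose maximiser on [0, c] is min (C_i / 2) c, i.e. t_i = min (\<sigma>_i x_i) c; and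
  near an equilibrium using every link the bound is attained, so this formula is also
  necessary. A capped equilibrium uses every link, since a small toll on an idle link already
  earns a positive profit. Finally x \<mapsto> a_i x + min (\<sigma>_i x) c is strictly increasing, so
  the flows of a solution grow with the common cost level; as they sum to 1, the solution is
  unique, and the intermediate value theorem provides one.\<close>

lemma capped_affine_solution:
  fixes A \<sigma> B c K :: real
  assumes A: "0 < A" and \<sigma>: "0 < \<sigma>"
  defines "u \<equiv> max ((K - B) / (A + \<sigma>)) ((K - B - c) / A)"
  shows "A * u + B + min (\<sigma> * u) c = K"
proof (cases "(K - B - c) / A \<le> (K - B) / (A + \<sigma>)")
  case True
  define v where "v = (K - B) / (A + \<sigma>)"
  have "(A + \<sigma>) * v = K - B" using A \<sigma> unfolding v_def by simp
  moreover have "\<sigma> * v \<le> c"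
    using True A \<sigma> unfolding v_def by (simp add: field_simps)
  ultimately show ?thesis using True unfolding u_def v_def[symmetric] by (simp add: algebra_simps)
next
  case False
  then have "c < \<sigma> * ((K - B - c) / A)"
    using A \<sigma> by (simp add: field_simps)
  then show ?thesis using False A unfolding u_def by simp
qed

lemma capped_parabola_max:
  fixes m c u :: real
  assumes "0 \<le> u" "u \<le> c"
  shows "u * (2 * m - u) \<le> min m c * (2 * m - min m c)"
proof (cases "m \<le> c")
  case True
  have "0 \<le> (m - u)\<^sup>2" by simp
  then show ?thesis using True by (simp add: power2_eq_square algebra_simps)
next
  case False
  have "0 \<le> (c - u) * (2 * m - c - u)" using assms False by simp
  then show ?thesis using False by (simp add: algebra_simps)
qed

lemma eventually_at_0_witnesses:
  fixes P :: "real \<Rightarrow> bool"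
  assumes ev: "\<forall>\<^sub>F d in at 0. P d" and e: "0 < e"
  shows "\<exists>d. 0 < d \<and> d < e \<and> P d" and "\<exists>d. - e < d \<and> d < 0 \<and> P d"
proof -
  have "\<forall>\<^sub>F d in at_right 0. P d" using ev by (simp add: eventually_at_split)
  with eventually_at_right_real[OF e] have "\<forall>\<^sub>F d in at_right 0. d \<in> {0<..<e} \<and> P d"
    by (rule eventually_conj)
  from eventually_happens'[OF trivial_limit_at_right_real this]
  show "\<exists>d. 0 < d \<and> d < e \<and> P d" by auto
  have "\<forall>\<^sub>F d in at_left 0. P d" using ev by (simp add: eventually_at_split)
  with eventually_at_left_real[of "- e" 0] e have "\<forall>\<^sub>F d in at_left 0. d \<in> {- e<..<0} \<and> P d"
    by (intro eventually_conj) simp_all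
  from eventually_happens'[OF trivial_limit_at_left_real this]
  show "\<exists>d. - e < d \<and> d < 0 \<and> P d" by auto
qed

locale affine_links =
  fixes n :: nat and a b :: "nat \<Rightarrow> real"
  assumes a_pos: "\<forall>i<n. 0 < a i"
begin

lemma wardrop_unused: "wardrop n a b t x \<Longrightarrow> i < n \<Longrightarrow> \<not> 0 < x i \<Longrightarrow> x i = 0"
  unfolding wardrop_def by force

lemma wardrop_common_level:
  assumes x: "wardrop n a b t x"
  obtains K where "\<And>i. i < n \<Longrightarrow> 0 < x i \<Longrightarrow> a i * x i + b i + t i = K"
    and "\<And>i. i < n \<Longrightarrow> K \<le> a i * x i + b i + t i"
proof -
  have "\<exists>k<n. 0 < x k"
  proof (rule ccontr)
    assume "\<not> (\<exists>k<n. 0 < x k)"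
    then have "(\<Sum>i<n. x i) \<le> 0" by (intro sum_nonpos) auto
    with x show False unfolding wardrop_def by simp
  qed
  then obtain k where k: "k < n" "0 < x k" by blast
  show thesis
  proof (rule that[of "a k * x k + b k + t k"])
    show "a i * x i + b i + t i = a k * x k + b k + t k" if "i < n" "0 < x i" for i
      using x k that unfolding wardrop_def by (meson order_antisym)
    show "a k * x k + b k + t k \<le> a i * x i + b i + t i" if "i < n" for i
      using x k that unfolding wardrop_def by blast
  qed
qed

lemma wardrop_variational_ineq:
  assumes x: "wardrop n a b t x" and y_nonneg: "\<forall>i<n. 0 \<le> y i" and y_sum: "(\<Sum>i<n. y i) = 1"
  shows "(\<Sum>i<n. x i * (a i * x i + b i + t i)) \<le> (\<Sum>i<n. y i * (a i * x i + b i + t i))"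
proof -
  obtain K where used: "\<And>i. i < n \<Longrightarrow> 0 < x i \<Longrightarrow> a i * x i + b i + t i = K"
    and low: "\<And>i. i < n \<Longrightarrow> K \<le> a i * x i + b i + t i"
    using wardrop_common_level[OF x] by blast
  have "(\<Sum>i<n. x i * (a i * x i + b i + t i)) = (\<Sum>i<n. x i * K)"
  proof (rule sum.cong[OF refl])
    fix i assume "i \<in> {..<n}"
    then show "x i * (a i * x i + b i + t i) = x i * K"
      using used wardrop_unused[OF x] by (cases "0 < x i") auto
  qed
  also have "\<dots> = K" using x by (simp add: wardrop_def flip: sum_distrib_right)
  also have "\<dots> = (\<Sum>i<n. y i * K)" using y_sum by (simp flip: sum_distrib_right)
  also have "\<dots> \<le> (\<Sum>i<n. y i * (a i * x i + b i + t i))"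
    using y_nonneg low by (intro sum_mono mult_left_mono) auto
  finally show ?thesis .
qed

lemma wardrop_unique:
  assumes x: "wardrop n a b t x" and y: "wardrop n a b t y"
  shows "x = y"
proof -
  define cx where "cx i = a i * x i + b i + t i" for i
  define cy where "cy i = a i * y i + b i + t i" for i
  have "(\<Sum>i<n. x i * cx i) \<le> (\<Sum>i<n. y i * cx i)"
    using wardrop_variational_ineq[OF x] y unfolding wardrop_def cx_def by blast
  moreover have "(\<Sum>i<n. y i * cy i) \<le> (\<Sum>i<n. x i * cy i)"
    using wardrop_variational_ineq[OF y] x unfolding wardrop_def cy_def by blast
  moreover have "(\<Sum>i<n. y i * cx i) - (\<Sum>i<n. x i * cx i) + ((\<Sum>i<n. x i * cy i) - (\<Sum>i<n. y i * cy i))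
      = (\<Sum>i<n. - (a i * (x i - y i)\<^sup>2))"
    unfolding sum_subtractf[symmetric] sum.distrib[symmetric]
    by (rule sum.cong) (auto simp: cx_def cy_def power2_eq_square algebra_simps)
  ultimately have "(\<Sum>i<n. a i * (x i - y i)\<^sup>2) \<le> 0" by (simp add: sum_negf)
  moreover have "\<forall>i\<in>{..<n}. 0 \<le> a i * (x i - y i)\<^sup>2" using a_pos by (simp add: less_imp_le)
  ultimately have "\<forall>i\<in>{..<n}. a i * (x i - y i)\<^sup>2 = 0"
    using sum_nonneg_eq_0_iff[of "{..<n}" "\<lambda>i. a i * (x i - y i)\<^sup>2"]
      sum_nonneg[of "{..<n}" "\<lambda>i. a i * (x i - y i)\<^sup>2"] by simp
  then have "\<forall>i<n. x i = y i" using a_pos by (simp add: less_imp_neq[symmetric])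
  moreover have "\<forall>i\<ge>n. x i = y i" using x y unfolding wardrop_def by simp
  ultimately show ?thesis by (metis ext not_less)
qed

lemma wardrop_exists:
  assumes "0 < n" and free_flow_nonneg: "\<forall>j<n. 0 \<le> b j + s j"
  shows "\<exists>x. wardrop n a b s x"
proof -
  define g where "g K = (\<Sum>j<n. max 0 ((K - b j - s j) / a j))" for K
  define K1 where "K1 = a 0 + b 0 + s 0"
  have "g 0 = 0" unfolding g_def
  proof (intro sum.neutral ballI)
    fix j assume "j \<in> {..<n}"
    then have "0 - b j - s j \<le> 0" "0 < a j" using free_flow_nonneg a_pos by auto
    then have "(0 - b j - s j) / a j \<le> 0" by (rule divide_nonpos_pos)
    then show "max 0 ((0 - b j - s j) / a j) = 0" by simp
  qed
  moreover have "1 \<le> g K1"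
  proof -
    have "a 0 \<noteq> 0" using a_pos \<open>0 < n\<close> by (metis less_irrefl)
    then have "max 0 ((K1 - b 0 - s 0) / a 0) = 1" unfolding K1_def by simp
    moreover have "max 0 ((K1 - b 0 - s 0) / a 0) \<le> g K1" unfolding g_def
      by (rule member_le_sum[where f="\<lambda>j. max 0 ((K1 - b j - s j) / a j)"]) (use \<open>0 < n\<close> in auto)
    ultimately show ?thesis by simp
  qed
  moreover have "0 \<le> K1" using a_pos free_flow_nonneg \<open>0 < n\<close> unfolding K1_def
    by (simp add: add_nonneg_nonneg add.assoc less_imp_le)
  moreover have "continuous_on {0..K1} g" unfolding g_def
    by (intro continuous_intros) (use a_pos in auto)
  ultimately obtain K where K: "g K = 1" using IVT'[of g 0 1 K1] by auto
  define x where "x j = (if j < n then max 0 ((K - b j - s j) / a j) else 0)" for j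
  have "wardrop n a b s x" unfolding wardrop_def
  proof (intro conjI allI impI)
    show "0 \<le> x i" for i unfolding x_def by simp
    show "(\<Sum>i<n. x i) = 1" using K unfolding g_def x_def by simp
    show "x i = 0" if "n \<le> i" for i using that unfolding x_def by simp
    fix i j assume i: "i < n" and j: "j < n" and xi: "0 < x i"
    have "a i * x i + b i + s i = K" using xi i a_pos unfolding x_def by (auto simp: max_def split: if_splits)
    moreover have "(K - b j - s j) / a j \<le> x j" using j unfolding x_def by simp
    then have "K - b j - s j \<le> a j * x j" using a_pos j by (simp add: divide_le_eq mult.commute)
    ultimately show "a i * x i + b i + s i \<le> a j * x j + b j + s j" by linarith
  qed
  then show ?thesis by blast
qed

lemma weq_wardrop: "0 < n \<Longrightarrow> \<forall>j<n. 0 \<le> b j + s j \<Longrightarrow> wardrop n a b s (weq n a b s)"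
  unfolding weq_def using wardrop_exists wardrop_unique by (metis theI)

lemma weq_eqI: "wardrop n a b s y \<Longrightarrow> weq n a b s = y"
  unfolding weq_def using wardrop_unique by (metis the_equality)

end

locale toll_game = affine_links +
  assumes two_links: "2 \<le> n" and b_nonneg: "\<forall>i<n. 0 \<le> b i"
    and untolled_interior: "\<forall>i<n. 0 < weq n a b (\<lambda>_. 0) i"
begin

lemma weq_wardrop_tolls: "\<forall>j<n. 0 \<le> s j \<Longrightarrow> wardrop n a b s (weq n a b s)"
  using two_links b_nonneg by (intro weq_wardrop) auto

lemma other_link_exists: obtains j where "j < n" "j \<noteq> i"
  using two_links by (cases "i = 0") (auto intro: that[of 0] that[of 1])

definition inv_slope_sum :: "nat \<Rightarrow> real" where
  "inv_slope_sum i = (\<Sum>j\<in>{..<n}-{i}. 1 / a j)"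

definition toll_slope :: "nat \<Rightarrow> real" where
  "toll_slope i = a i + 1 / inv_slope_sum i"

text \<open>With tolls s on the other links fixed, the toll on link i at which link i loses
  all its flow: the other links then carry the whole demand at level b i + choke_toll s i.\<close>
definition choke_toll :: "(nat \<Rightarrow> real) \<Rightarrow> nat \<Rightarrow> real" where
  "choke_toll s i = (1 + (\<Sum>j\<in>{..<n}-{i}. (b j + s j) / a j)) / inv_slope_sum i - b i"

lemma inv_slope_sum_pos: "0 < inv_slope_sum i"
proof -
  obtain j where "j < n" "j \<noteq> i" by (rule other_link_exists)
  then show ?thesis unfolding inv_slope_sum_def using a_pos by (intro sum_pos) auto
qed

lemma toll_slope_pos: "i < n \<Longrightarrow> 0 < toll_slope i"
  unfolding toll_slope_def using inv_slope_sum_pos a_pos by (simp add: add_pos_pos)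

lemma choke_toll_gap:
  "s i + toll_slope i * y i - choke_toll s i
    = ((\<Sum>j\<in>{..<n}-{i}. (a i * y i + b i + s i - b j - s j) / a j) - (1 - y i)) / inv_slope_sum i"
proof -
  have sum_eq: "(a i * y i + b i + s i) * inv_slope_sum i - (\<Sum>j\<in>{..<n}-{i}. (b j + s j) / a j)
      = (\<Sum>j\<in>{..<n}-{i}. (a i * y i + b i + s i - b j - s j) / a j)"
    unfolding inv_slope_sum_def
    by (simp add: sum_distrib_left sum_subtractf[symmetric] diff_divide_distrib add_divide_distrib diff_diff_eq)
  show ?thesis
    unfolding sum_eq[symmetric] choke_toll_def toll_slope_def
    using inv_slope_sum_pos[of i] by (simp add: field_simps)
qed

lemma wardrop_sum_others: "wardrop n a b s y \<Longrightarrow> i < n \<Longrightarrow> (\<Sum>j\<in>{..<n}-{i}. y j) = 1 - y i"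
  unfolding wardrop_def using sum.remove[of "{..<n}" i y] by simp

lemma wardrop_own_flow_bound:
  assumes y: "wardrop n a b s y" and i: "i < n" and used: "0 < y i"
  shows "s i + toll_slope i * y i \<le> choke_toll s i"
proof -
  obtain K where level: "\<And>j. j < n \<Longrightarrow> 0 < y j \<Longrightarrow> a j * y j + b j + s j = K"
    and low: "\<And>j. j < n \<Longrightarrow> K \<le> a j * y j + b j + s j"
    using wardrop_common_level[OF y] by blast
  have "(K - b j - s j) / a j \<le> y j" if "j \<in> {..<n}-{i}" for j
    using level[of j] low[of j] wardrop_unused[OF y, of j] a_pos that
    by (cases "0 < y j") (auto simp: divide_le_eq mult.commute)
  then have "(\<Sum>j\<in>{..<n}-{i}. (K - b j - s j) / a j) \<le> (\<Sum>j\<in>{..<n}-{i}. y j)"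
    by (rule sum_mono)
  also have "\<dots> = 1 - y i" by (rule wardrop_sum_others[OF y i])
  finally have "s i + toll_slope i * y i - choke_toll s i \<le> 0"
    unfolding choke_toll_gap level[OF i used]
    using inv_slope_sum_pos[of i] by (simp add: divide_nonpos_pos)
  then show ?thesis by simp
qed

lemma wardrop_own_flow_eq:
  assumes y: "wardrop n a b s y" and i: "i < n" and all_used: "\<forall>j<n. 0 < y j"
  shows "s i + toll_slope i * y i = choke_toll s i"
proof -
  obtain K where level: "\<And>j. j < n \<Longrightarrow> 0 < y j \<Longrightarrow> a j * y j + b j + s j = K"
    using wardrop_common_level[OF y] by blast
  have "(K - b j - s j) / a j = y j" if "j \<in> {..<n}-{i}" for j
    using level[of j] all_used a_pos that by (auto simp: divide_eq_eq)
  then have "(\<Sum>j\<in>{..<n}-{i}. (K - b j - s j) / a j) = 1 - y i"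
    using wardrop_sum_others[OF y i] by simp
  then show ?thesis
    using choke_toll_gap[where s=s and i=i and y=y] level[OF i] all_used i by simp
qed

definition untolled_level :: real where
  "untolled_level = a 0 * weq n a b (\<lambda>_. 0) 0 + b 0"

lemma untolled_wardrop: "wardrop n a b (\<lambda>_. 0) (weq n a b (\<lambda>_. 0))"
  by (rule weq_wardrop_tolls) simp

lemma untolled_cost:
  assumes j: "j < n"
  shows "a j * weq n a b (\<lambda>_. 0) j + b j = untolled_level"
proof -
  obtain K where "\<And>i. i < n \<Longrightarrow> 0 < weq n a b (\<lambda>_. 0) i \<Longrightarrow> a i * weq n a b (\<lambda>_. 0) i + b i + 0 = K"
    using wardrop_common_level[OF untolled_wardrop] by blast
  then show ?thesis
    using j two_links untolled_interior unfolding untolled_level_def by simp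
qed

lemma b_lt_untolled_level: "j < n \<Longrightarrow> b j < untolled_level"
  using untolled_cost[of j] untolled_interior a_pos by (metis less_add_same_cancel2 mult_pos_pos)

lemma wardrop_used_if_toll_below_untolled_level:
  assumes s: "\<forall>j<n. 0 \<le> s j" and y: "wardrop n a b s y" and i: "i < n"
    and low_toll: "s i < untolled_level - b i"
  shows "0 < y i"
proof (rule ccontr)
  assume "\<not> 0 < y i"
  then have yi: "y i = 0" by (rule wardrop_unused[OF y i])
  have "y j < weq n a b (\<lambda>_. 0) j" if j: "j \<in> {..<n}" for j
  proof (cases "0 < y j")
    case True
    then have "a j * y j + b j + s j \<le> a i * y i + b i + s i"
      using y i j unfolding wardrop_def by auto
    then have "a j * y j < a j * weq n a b (\<lambda>_. 0) j"
      using untolled_cost[of j] s j low_toll yi by auto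
    then show ?thesis using a_pos j by (simp add: mult_less_cancel_left_pos)
  next
    case False
    then show ?thesis using wardrop_unused[OF y, of j] untolled_interior j by simp
  qed
  then have "(\<Sum>j<n. y j) < (\<Sum>j<n. weq n a b (\<lambda>_. 0) j)"
    using two_links by (intro sum_strict_mono) (auto simp: lessThan_empty_iff)
  with y untolled_wardrop show False unfolding wardrop_def by simp
qed

lemma sum_toll_shift_others:
  "(\<Sum>j\<in>{..<n}-{i}. d / (toll_slope i * inv_slope_sum i * a j)) = d / toll_slope i"
proof -
  have "(\<Sum>j\<in>{..<n}-{i}. d / (toll_slope i * inv_slope_sum i * a j))
      = d / (toll_slope i * inv_slope_sum i) * inv_slope_sum i"
    unfolding inv_slope_sum_def by (simp add: sum_distrib_left)
  then show ?thesis using inv_slope_sum_pos[of i] by simp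
qed

lemma weq_toll_shift:
  assumes w: "wardrop n a b t x" and all_used: "\<forall>j<n. 0 < x j" and i: "i < n"
    and own_pos: "0 < x i - d / toll_slope i"
    and others_pos: "\<forall>j\<in>{..<n}-{i}. 0 < x j + d / (toll_slope i * inv_slope_sum i * a j)"
  shows "weq n a b (t(i := t i + d)) =
    (\<lambda>j. if j = i then x i - d / toll_slope i
         else if j < n then x j + d / (toll_slope i * inv_slope_sum i * a j) else 0)"
    (is "_ = ?y")
proof (rule weq_eqI)
  have \<sigma>: "0 < toll_slope i" by (rule toll_slope_pos[OF i])
  obtain K where level: "\<And>j. j < n \<Longrightarrow> 0 < x j \<Longrightarrow> a j * x j + b j + t j = K"
    using wardrop_common_level[OF w] by blast
  define L where "L = K + d / (toll_slope i * inv_slope_sum i)"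
  have new_level: "a j * ?y j + b j + (t(i := t i + d)) j = L" if j: "j < n" for j
  proof (cases "j = i")
    case True
    have "d - a i * (d / toll_slope i) = d * (toll_slope i - a i) / toll_slope i"
      using \<sigma> by (simp add: field_simps)
    also have "\<dots> = d / (toll_slope i * inv_slope_sum i)"
      unfolding toll_slope_def by simp
    finally have "d - a i * (d / toll_slope i) = d / (toll_slope i * inv_slope_sum i)" .
    then show ?thesis
      using True level[OF i] all_used i unfolding L_def by (simp add: right_diff_distrib)
  next
    case False
    have "a j * (d / (toll_slope i * inv_slope_sum i * a j)) = d / (toll_slope i * inv_slope_sum i)"
      using a_pos j by (simp add: less_imp_neq[symmetric])
    then show ?thesis using False j level[OF j] all_used unfolding L_def by (simp add: distrib_left)
  qed
  show "wardrop n a b (t(i := t i + d)) ?y" unfolding wardrop_def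
  proof (intro conjI allI impI)
    show "0 \<le> ?y j" if "j < n" for j using own_pos others_pos that by (auto simp: less_imp_le)
    show "?y j = 0" if "n \<le> j" for j using that i by auto
    show "a j * ?y j + b j + (t(i := t i + d)) j \<le> a k * ?y k + b k + (t(i := t i + d)) k"
      if "j < n" "k < n" "0 < ?y j" for j k using new_level that by simp
    have "(\<Sum>j<n. ?y j) = ?y i + (\<Sum>j\<in>{..<n}-{i}. ?y j)"
      using sum.remove[of "{..<n}" i ?y] i by simp
    also have "(\<Sum>j\<in>{..<n}-{i}. ?y j) = (\<Sum>j\<in>{..<n}-{i}. x j + d / (toll_slope i * inv_slope_sum i * a j))"
      by (rule sum.cong) auto
    also have "\<dots> = (1 - x i) + d / toll_slope i"
      using wardrop_sum_others[OF w i] sum_toll_shift_others by (simp add: sum.distrib)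
    finally show "(\<Sum>j<n. ?y j) = 1" by simp
  qed
qed

lemma eventually_profit_toll_shift:
  assumes w: "wardrop n a b t x" and all_used: "\<forall>j<n. 0 < x j" and i: "i < n"
  shows "\<forall>\<^sub>F d in at 0. profit n a b (t(i := t i + d)) i = (t i + d) * (x i - d / toll_slope i)"
proof -
  have "\<forall>\<^sub>F d in at 0. 0 < x i - d / toll_slope i"
    by (rule order_tendstoD(1)[of _ "x i"]) (use all_used i toll_slope_pos[OF i] in \<open>auto intro!: tendsto_eq_intros\<close>)
  moreover have "\<forall>\<^sub>F d in at 0. \<forall>j\<in>{..<n}-{i}. 0 < x j + d / (toll_slope i * inv_slope_sum i * a j)"
    by (intro eventually_ball_finite ballI order_tendstoD(1)[of _ "x _"])
       (use all_used a_pos toll_slope_pos[OF i] inv_slope_sum_pos[of i] in \<open>auto intro!: tendsto_eq_intros\<close>)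
  ultimately show ?thesis
    by eventually_elim (simp add: profit_def weq_toll_shift[OF w all_used i])
qed

lemma capped_eq_tolls:
  assumes "t \<in> capped_eq n a b c"
  shows "\<forall>j<n. 0 \<le> t j \<and> t j \<le> c" "\<forall>j\<ge>n. t j = 0"
    and "\<And>j t'. j < n \<Longrightarrow> 0 \<le> t' \<Longrightarrow> t' \<le> c \<Longrightarrow> profit n a b (t(j := t')) j \<le> profit n a b t j"
  using assms unfolding capped_eq_def by auto

lemma capped_eq_all_used:
  assumes c: "0 \<le> c" and t: "t \<in> capped_eq n a b c" and i: "i < n"
  shows "0 < weq n a b t i"
proof (rule ccontr)
  note t_range = capped_eq_tolls(1)[OF t] and best = capped_eq_tolls(3)[OF t]
  assume "\<not> 0 < weq n a b t i"
  then have unused: "weq n a b t i = 0"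
    using wardrop_unused[OF weq_wardrop_tolls] t_range i by simp
  show False
  proof (cases "c = 0")
    case True
    then have "t = (\<lambda>_. 0)" using t_range capped_eq_tolls(2)[OF t] by (metis antisym not_less)
    then show False using unused untolled_interior i by (metis less_irrefl)
  next
    case False
    define t' where "t' = min c ((untolled_level - b i) / 2)"
    have t': "0 < t'" "t' \<le> c" "t' < untolled_level - b i"
      using c False b_lt_untolled_level[OF i] unfolding t'_def by (auto simp: min_def)
    have s: "\<forall>j<n. 0 \<le> (t(i := t')) j" using t_range t' by auto
    have "0 < weq n a b (t(i := t')) i"
      by (rule wardrop_used_if_toll_below_untolled_level[OF s weq_wardrop_tolls[OF s] i]) (use t' in simp)
    then have "0 < profit n a b (t(i := t')) i" unfolding profit_def using t' by simp
    also have "\<dots> \<le> profit n a b t i" using best i t' by simp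
    also have "\<dots> = 0" using unused by (simp add: profit_def)
    finally show False by simp
  qed
qed

text \<open>Otherwise a small move of t i towards toll_slope i * x i within [0, c] would pay.\<close>
lemma capped_eq_toll:
  assumes c: "0 \<le> c" and t: "t \<in> capped_eq n a b c" and i: "i < n"
  shows "t i = min (toll_slope i * weq n a b t i) c"
proof (rule ccontr)
  note t_range = capped_eq_tolls(1)[OF t] and best = capped_eq_tolls(3)[OF t]
  define x where "x = weq n a b t"
  define g where "g = toll_slope i * x i - t i"
  have \<sigma>: "0 < toll_slope i" by (rule toll_slope_pos[OF i])
  have all_used: "\<forall>j<n. 0 < x j" using capped_eq_all_used[OF c t] unfolding x_def by blast
  have w: "wardrop n a b t x" unfolding x_def by (rule weq_wardrop_tolls) (use t_range in auto)
  have gain: "\<forall>\<^sub>F d in at 0. profit n a b (t(i := t i + d)) i - profit n a b t i = d * (g - d) / toll_slope i"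
    using eventually_profit_toll_shift[OF w all_used i]
    by eventually_elim (use \<sigma> in \<open>simp add: profit_def x_def[symmetric] g_def field_simps\<close>)
  assume "t i \<noteq> min (toll_slope i * x i) c"
  then consider (raise) "0 < g" "t i < c" | (lower) "g < 0"
    using t_range i unfolding g_def by (fastforce simp: min_def split: if_splits)
  then obtain d where d: "0 \<le> t i + d" "t i + d \<le> c" "0 < d * (g - d)"
    and d_gain: "profit n a b (t(i := t i + d)) i - profit n a b t i = d * (g - d) / toll_slope i"
  proof cases
    case raise
    then obtain d where "0 < d" "d < min g (c - t i)"
      and "profit n a b (t(i := t i + d)) i - profit n a b t i = d * (g - d) / toll_slope i"
      using eventually_at_0_witnesses(1)[OF gain, of "min g (c - t i)"] by auto
    then show thesis by (intro that[of d]) (use t_range i in \<open>auto intro!: mult_pos_pos\<close>)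
  next
    case lower
    have "0 < t i" using lower all_used \<sigma> i unfolding g_def by (smt (verit) mult_pos_pos)
    then obtain d where "- min (- g) (t i) < d" "d < 0"
      and "profit n a b (t(i := t i + d)) i - profit n a b t i = d * (g - d) / toll_slope i"
      using eventually_at_0_witnesses(2)[OF gain, of "min (- g) (t i)"] lower by auto
    then show thesis by (intro that[of d]) (use t_range i in \<open>auto intro!: mult_neg_neg\<close>)
  qed
  have "0 < d * (g - d) / toll_slope i" using d(3) \<sigma> by (rule divide_pos_pos)
  then have "profit n a b t i < profit n a b (t(i := t i + d)) i" using d_gain by simp
  with best[OF i d(1,2)] show False by simp
qed

lemma candidate_toll: "candidate n a b c t x \<Longrightarrow> i < n \<Longrightarrow> t i = min (toll_slope i * x i) c"
  unfolding candidate_def toll_slope_def inv_slope_sum_def by simp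

text \<open>Since a_i x + min (toll_slope i * x) c is strictly increasing in x, a higher common
  cost level forces a higher flow on every link.\<close>
lemma candidate_flows_mono:
  assumes "candidate n a b c t x" and "candidate n a b c t' x'"
    and "\<forall>i<n. a i * x i + b i + t i = K" and "\<forall>i<n. a i * x' i + b i + t' i = K'"
    and "K \<le> K'" and "i < n"
  shows "x i \<le> x' i"
proof (rule ccontr)
  assume "\<not> x i \<le> x' i"
  then have "a i * x' i < a i * x i" "toll_slope i * x' i \<le> toll_slope i * x i"
    using a_pos toll_slope_pos \<open>i < n\<close> by auto
  then have "a i * x' i + b i + t' i < a i * x i + b i + t i"
    using candidate_toll[OF assms(1,6)] candidate_toll[OF assms(2,6)] by (simp add: min_def)
  with assms(3-6) show False by simp
qed

lemma candidate_unique: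
  assumes ct: "candidate n a b c t x" and ct': "candidate n a b c t' x'"
  shows "\<forall>i<n. t i = t' i \<and> x i = x' i"
proof -
  have flows_eq: "\<forall>i<n. x i = x' i"
    if ct: "candidate n a b c t x" and ct': "candidate n a b c t' x'"
      and K: "\<forall>i<n. a i * x i + b i + t i = K" and K': "\<forall>i<n. a i * x' i + b i + t' i = K'"
      and "K \<le> K'" for t x t' x' K K'
  proof -
    have le: "\<forall>i\<in>{..<n}. 0 \<le> x' i - x i"
      using candidate_flows_mono[OF ct ct' K K' \<open>K \<le> K'\<close>] by simp
    have "(\<Sum>i<n. x' i - x i) = 0"
      using ct ct' unfolding candidate_def by (simp add: sum_subtractf)
    then show ?thesis using sum_nonneg_eq_0_iff[of "{..<n}" "\<lambda>i. x' i - x i"] le by simp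
  qed
  obtain K K' where "\<forall>i<n. a i * x i + b i + t i = K" "\<forall>i<n. a i * x' i + b i + t' i = K'"
    using ct ct' unfolding candidate_def by blast
  then have "\<forall>i<n. x i = x' i"
    using flows_eq[OF ct ct'] flows_eq[OF ct' ct] by (metis linear)
  then show ?thesis using candidate_toll[OF ct] candidate_toll[OF ct'] by simp
qed

text \<open>The flow x with a j * x + b j + min (toll_slope j * x) c = K, by capped_affine_solution.\<close>
definition candidate_flow :: "real \<Rightarrow> real \<Rightarrow> nat \<Rightarrow> real" where
  "candidate_flow c K j = max ((K - b j) / (a j + toll_slope j)) ((K - b j - c) / a j)"

lemma candidate_flow_pos: "untolled_level \<le> K \<Longrightarrow> j < n \<Longrightarrow> 0 < candidate_flow c K j"
  using b_lt_untolled_level[of j] a_pos toll_slope_pos[of j] unfolding candidate_flow_def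
  by (auto intro!: divide_pos_pos add_pos_pos intro: max.strict_coboundedI1)

lemma sum_candidate_flow_untolled_le:
  assumes c: "0 \<le> c"
  shows "(\<Sum>j<n. candidate_flow c untolled_level j) \<le> 1"
proof -
  have "candidate_flow c untolled_level j \<le> weq n a b (\<lambda>_. 0) j" if j: "j \<in> {..<n}" for j
  proof -
    have aj: "0 < a j" "0 < toll_slope j" using a_pos toll_slope_pos j by auto
    have "weq n a b (\<lambda>_. 0) j = (untolled_level - b j) / a j"
      using untolled_cost[of j] j aj by (auto simp: field_simps)
    moreover have "(untolled_level - b j) / (a j + toll_slope j) \<le> (untolled_level - b j) / a j"
      using b_lt_untolled_level[of j] j aj by (intro divide_left_mono) auto
    moreover have "(untolled_level - b j - c) / a j \<le> (untolled_level - b j) / a j"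
      using c aj by (intro divide_right_mono) auto
    ultimately show ?thesis unfolding candidate_flow_def by simp
  qed
  then have "(\<Sum>j<n. candidate_flow c untolled_level j) \<le> (\<Sum>j<n. weq n a b (\<lambda>_. 0) j)"
    by (rule sum_mono)
  also have "\<dots> = 1" using untolled_wardrop unfolding wardrop_def by simp
  finally show ?thesis .
qed

lemma candidate_exists:
  assumes c: "0 \<le> c"
  shows "\<exists>t x. candidate n a b c t x"
proof -
  define K1 where "K1 = max untolled_level (a 0 + b 0 + c)"
  have "1 \<le> (\<Sum>j<n. candidate_flow c K1 j)"
  proof -
    have "1 \<le> (K1 - b 0 - c) / a 0" using a_pos two_links unfolding K1_def by (simp add: le_divide_eq)
    also have "\<dots> \<le> candidate_flow c K1 0" unfolding candidate_flow_def by simp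
    also have "\<dots> \<le> (\<Sum>j<n. candidate_flow c K1 j)"
      using two_links candidate_flow_pos[of K1] unfolding K1_def
      by (intro member_le_sum) (auto simp: less_imp_le)
    finally show ?thesis .
  qed
  moreover have "continuous_on {untolled_level..K1} (\<lambda>K. \<Sum>j<n. candidate_flow c K j)"
    unfolding candidate_flow_def using a_pos toll_slope_pos
    by (intro continuous_intros) (auto simp: add_pos_pos less_imp_neq[symmetric])
  ultimately obtain K where K: "untolled_level \<le> K" "(\<Sum>j<n. candidate_flow c K j) = 1"
    using IVT'[of "\<lambda>K. \<Sum>j<n. candidate_flow c K j" untolled_level 1 K1]
      sum_candidate_flow_untolled_le[OF c] unfolding K1_def by auto
  define t where "t j = K - b j - a j * candidate_flow c K j" for j
  have "candidate n a b c t (candidate_flow c K)" unfolding candidate_def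
  proof (intro conjI allI impI)
    show "\<exists>L. \<forall>i<n. a i * candidate_flow c K i + b i + t i = L"
      unfolding t_def by (intro exI[of _ K]) simp
    show "(\<Sum>i<n. candidate_flow c K i) = 1" by (rule K(2))
    show "0 < candidate_flow c K i" if "i < n" for i using candidate_flow_pos K(1) that by simp
    fix i assume i: "i < n"
    have "t i = min (toll_slope i * candidate_flow c K i) c"
      using capped_affine_solution[of "a i" "toll_slope i" K "b i" c] a_pos toll_slope_pos i
      unfolding t_def candidate_flow_def by simp
    then show "t i = min ((a i + 1 / (\<Sum>j\<in>{..<n} - {i}. 1 / a j)) * candidate_flow c K i) c"
      unfolding toll_slope_def inv_slope_sum_def .
  qed
  then show ?thesis by blast
qed

lemma choke_toll_upd_self: "choke_toll (s(i := v)) i = choke_toll s i"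
  unfolding choke_toll_def by (subst sum.cong[OF refl, of _ _ "\<lambda>j. (b j + s j) / a j"]) auto

text \<open>Against a deviation t' the flow on link i is at most (C - t') / toll_slope i, where
  C = t i + toll_slope i * x i is the choke toll; and t' (C - t') is maximised on [0, c] by
  t i = min (C / 2) c.\<close>
lemma interior_toll_best_response:
  assumes w: "wardrop n a b t x" and all_used: "\<forall>j<n. 0 < x j" and i: "i < n"
    and t_nonneg: "\<forall>j<n. 0 \<le> t j" and toll: "t i = min (toll_slope i * x i) c"
    and t': "0 \<le> t'" "t' \<le> c"
  shows "profit n a b (t(i := t')) i \<le> t i * x i"
proof -
  define s where "s = t(i := t')"
  define C where "C = choke_toll t i"
  have \<sigma>: "0 < toll_slope i" by (rule toll_slope_pos[OF i])
  have s_nonneg: "\<forall>j<n. 0 \<le> s j" using t_nonneg t' unfolding s_def by simp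
  have ws: "wardrop n a b s (weq n a b s)" by (rule weq_wardrop_tolls[OF s_nonneg])
  have C_eq: "t i + toll_slope i * x i = C"
    unfolding C_def by (rule wardrop_own_flow_eq[OF w i all_used])
  have "min (C / 2) c = t i"
  proof (cases "toll_slope i * x i \<le> c")
    case True
    then have t_i: "t i = toll_slope i * x i" using toll by simp
    then have half: "C / 2 = t i" using C_eq by linarith
    show ?thesis unfolding half using t_i True by simp
  next
    case False
    then show ?thesis using toll C_eq by simp
  qed
  then have parabola: "t' * (C - t') \<le> t i * (C - t i)"
    using capped_parabola_max[OF t', of "C / 2"] by simp
  show ?thesis unfolding s_def[symmetric] profit_def
  proof (cases "0 < weq n a b s i")
    case False
    then show "s i * weq n a b s i \<le> t i * x i"
      using wardrop_unused[OF ws i] t_nonneg[rule_format, OF i] all_used[rule_format, OF i] by simp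
  next
    case True
    have "s i = t'" "choke_toll s i = C" unfolding s_def C_def by (simp_all add: choke_toll_upd_self)
    then have "t' + toll_slope i * weq n a b s i \<le> C"
      using wardrop_own_flow_bound[OF ws i True] by simp
    then have "weq n a b s i \<le> (C - t') / toll_slope i" using \<sigma> by (simp add: field_simps)
    then have "t' * weq n a b s i \<le> t' * ((C - t') / toll_slope i)"
      using t'(1) by (rule mult_left_mono)
    also have "\<dots> \<le> t i * (C - t i) / toll_slope i"
      using parabola \<sigma> by (simp add: divide_right_mono)
    also have "\<dots> = t i * x i" using \<sigma> by (simp flip: C_eq)
    finally show "s i * weq n a b s i \<le> t i * x i" unfolding s_def by simp
  qed
qed

lemma candidate_capped_eq:
  assumes c: "0 \<le> c" and ct: "candidate n a b c t x"
  shows "(\<lambda>j. if j < n then t j else 0) \<in> capped_eq n a b c" (is "?t \<in> _")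
proof -
  define x' where "x' j = (if j < n then x j else 0)" for j
  obtain K where K: "\<forall>i<n. a i * x i + b i + t i = K" using ct unfolding candidate_def by blast
  have all_used: "\<forall>i<n. 0 < x' i" using ct unfolding candidate_def x'_def by simp
  have toll: "?t i = min (toll_slope i * x' i) c" if "i < n" for i
    using candidate_toll[OF ct that] that unfolding x'_def by simp
  have t_range: "0 \<le> ?t i \<and> ?t i \<le> c" if "i < n" for i
    using toll[OF that] toll_slope_pos[OF that] all_used[rule_format, OF that] c by simp
  have w: "wardrop n a b ?t x'" unfolding wardrop_def
  proof (intro conjI allI impI)
    show "0 \<le> x' i" if "i < n" for i using all_used that by (simp add: less_imp_le)
    show "(\<Sum>i<n. x' i) = 1" using ct unfolding candidate_def x'_def by simp
    show "x' i = 0" if "n \<le> i" for i using that unfolding x'_def by simp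
    show "a i * x' i + b i + ?t i \<le> a j * x' j + b j + ?t j" if "i < n" "j < n" "0 < x' i" for i j
      using K that unfolding x'_def by simp
  qed
  show ?thesis unfolding capped_eq_def
  proof (intro CollectI conjI allI impI)
    show "0 \<le> ?t i" "?t i \<le> c" if "i < n" for i using t_range that by auto
    show "?t i = 0" if "n \<le> i" for i using that by simp
    fix i t' assume "i < n" and "0 \<le> t' \<and> t' \<le> c"
    then show "profit n a b (?t(i := t')) i \<le> profit n a b ?t i"
      using interior_toll_best_response[OF w all_used _ _ toll] t_range weq_eqI[OF w]
      by (simp add: profit_def)
  qed
qed

lemma capped_eq_candidate:
  assumes c: "0 \<le> c" and t: "t \<in> capped_eq n a b c"
  shows "candidate n a b c t (weq n a b t)"
proof -
  have w: "wardrop n a b t (weq n a b t)"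
    by (rule weq_wardrop_tolls) (use capped_eq_tolls(1)[OF t] in auto)
  have all_used: "\<forall>i<n. 0 < weq n a b t i" using capped_eq_all_used[OF c t] by blast
  obtain K where "\<And>i. i < n \<Longrightarrow> 0 < weq n a b t i \<Longrightarrow> a i * weq n a b t i + b i + t i = K"
    using wardrop_common_level[OF w] by blast
  with all_used have "\<forall>i<n. a i * weq n a b t i + b i + t i = K" by blast
  then show ?thesis
    using w all_used capped_eq_toll[OF c t]
    unfolding candidate_def wardrop_def toll_slope_def inv_slope_sum_def by blast
qed

lemma ex1_capped_eq:
  assumes c: "0 \<le> c"
  shows "\<exists>!t. t \<in> capped_eq n a b c"
proof -
  obtain t x where ct: "candidate n a b c t x" using candidate_exists[OF c] by blast
  show ?thesis
  proof (rule ex1I)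
    show "(\<lambda>j. if j < n then t j else 0) \<in> capped_eq n a b c"
      by (rule candidate_capped_eq[OF c ct])
  next
    fix t' assume t': "t' \<in> capped_eq n a b c"
    have "\<forall>i<n. t' i = t i" using candidate_unique[OF capped_eq_candidate[OF c t'] ct] by blast
    with capped_eq_tolls(2)[OF t'] show "t' = (\<lambda>j. if j < n then t j else 0)"
      by (auto simp: not_less)
  qed
qed

end

theorem mainTheorem6:
  fixes n :: nat and a b :: "nat \<Rightarrow> real"
  assumes "n \<ge> 2"
    and "\<forall>i<n. 0 < a i" and "\<forall>i<n. 0 \<le> b i"
    and "\<forall>i<n. 0 < weq n a b (\<lambda>_. 0) i"
  shows "\<forall>c \<ge> 0.
           (\<forall>t x t' x'. candidate n a b c t x \<and> candidate n a b c t' x' \<longrightarrow>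
                (\<forall>i<n. t i = t' i \<and> x i = x' i))
         \<and> (\<exists>!t. t \<in> capped_eq n a b c)"
proof -
  interpret toll_game n a b using assms by unfold_locales auto
  show ?thesis using candidate_unique ex1_capped_eq by blast
qed

end
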